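(* For every constant $\epsilon>0$, no deterministic online algorithm is $(\frac12+\epsilon)$-competitive for the maximum-weight online bipartite left-perfect matching problem under vertex arrivals with hard budget $k=4$, even when all edge weights are in $\{0,1\}$. That is, for every deterministic online algorithm for this problem and every constant $c\ge0$, there is an instance with all edge weights in $\{0,1\}$ on which the weight of the algorithm's final left-perfect matching is strictly less than $(\frac12+\epsilon)\cdot\mathsf{OPT}-c$, where $\mathsf{OPT}$ is the maximum weight of a left-perfect matching of $G$.
   Context: Problem: $G=(L\cup R,E)$ is a complete bipartite graph with $|L|\le|R|$ and nonnegative edge weights $w$. The algorithm initially knows $R$ (and $k=4$). Over $|L|$ timesteps the vertices of $L$ arrive one at a time, together with all incident edges and their weights. At the end of each timestep the algorithm must output a left-perfect matching of the revealed graph (every arrived vertex of $L$ matched). The new matching $M_2$ must be obtainable from the previous one $M_1$ (empty before the first timestep) by at most $4$ (re)assignments, the number of (re)assignments being the number of vertices of nonzero degree in $M_1\triangle M_2$; once a vertex is matched it must remain matched afterwards. An algorithm is $\alpha$-competitive if there is a constant $c\ge0$ such that on every instance the weight of its final matching is at least $\alpha\cdot\mathsf{OPT}-c$. *)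

theory Defs
  imports Complex_Main
begin

text \<open>The right side R is {0..<m} (known to the algorithm). The left vertices
  arrive as 0,1,...,n-1; arriving vertex i comes with its row of weights
  ws!i (a real list of length m, entry j = weight of edge (i,j)).
  A left-perfect matching of the revealed graph after t arrivals is a list M of
  length t of distinct right vertices (< m); left vertex i is matched to M!i.\<close>

definition lpm :: "nat \<Rightarrow> nat \<Rightarrow> nat list \<Rightarrow> bool" where
  "lpm m t M \<longleftrightarrow> length M = t \<and> distinct M \<and> (\<forall>j\<in>set M. j < m)"

definition medges :: "nat list \<Rightarrow> (nat \<times> nat) set" where
  "medges M = {(i, M ! i) | i. i < length M}"

text \<open>number of vertices of nonzero degree in the symmetric difference
  (left vertices and right vertices counted separately, as they are distinct vertices)\<close>
definition reassignments :: "nat list \<Rightarrow> nat list \<Rightarrow> nat" where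
  "reassignments M1 M2 =
     (let D = (medges M1 - medges M2) \<union> (medges M2 - medges M1)
      in card (fst ` D) + card (snd ` D))"

definition mweight :: "real list list \<Rightarrow> nat list \<Rightarrow> real" where
  "mweight ws M = (\<Sum>i<length M. ws ! i ! (M ! i))"

definition OPT :: "nat \<Rightarrow> real list list \<Rightarrow> real" where
  "OPT m ws = Max {mweight ws M | M. lpm m (length ws) M}"

text \<open>A deterministic online algorithm: given m (i.e. R) and the rows revealed so far,
  it outputs its current matching. Output after t steps (M_0 is empty):\<close>
definition out :: "(nat \<Rightarrow> real list list \<Rightarrow> nat list) \<Rightarrow> nat \<Rightarrow> real list list \<Rightarrow> nat \<Rightarrow> nat list" where
  "out alg m ws t = (if t = 0 then [] else alg m (take t ws))"

definition valid_instance :: "nat \<Rightarrow> real list list \<Rightarrow> bool" where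
  "valid_instance m ws \<longleftrightarrow> length ws \<le> m \<and>
     (\<forall>r\<in>set ws. length r = m \<and> (\<forall>x\<in>set r. 0 \<le> x))"

text \<open>Feasibility of the algorithm with hard budget k on every instance:
  each output is left-perfect, consecutive outputs differ by at most k (re)assignments,
  and a matched vertex stays matched (right side; left side follows from left-perfectness).\<close>
definition valid_alg :: "nat \<Rightarrow> (nat \<Rightarrow> real list list \<Rightarrow> nat list) \<Rightarrow> bool" where
  "valid_alg k alg \<longleftrightarrow> (\<forall>m ws. valid_instance m ws \<longrightarrow>
     (\<forall>t\<in>{1..length ws}.
        lpm m t (out alg m ws t) \<and>
        reassignments (out alg m ws (t - 1)) (out alg m ws t) \<le> k \<and>
        set (out alg m ws (t - 1)) \<subseteq> set (out alg m ws t)))"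

definition final_weight :: "(nat \<Rightarrow> real list list \<Rightarrow> nat list) \<Rightarrow> nat \<Rightarrow> real list list \<Rightarrow> real" where
  "final_weight alg m ws = mweight ws (out alg m ws (length ws))"

end

theory Submission
  imports Defs
begin

text \<open>The adversary plays in rounds of four arrivals. The first two arriving vertices have
  only zero edges; after them the algorithm has matched two fresh right vertices. The third
  vertex has weight-1 edges to exactly these two, and the fourth vertex has a single weight-1
  edge, to the fresh vertex that the algorithm has just given to the third one (if any).
  An offline matching collects 2 per round. With budget 4, a left vertex can only be moved
  to a right vertex that was unmatched before: otherwise the previous owner of that vertex
  moves too, and together with the arriving vertex five vertices change. So once the third
  vertex leaves the fresh vertex it was matched to, it never gets a fresh vertex again, and
  the algorithm collects at most 1 per round.\<close>

lemma finite_medges: "finite (medges M)"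
proof -
  have "medges M = (\<lambda>i. (i, M ! i)) ` {..<length M}" by (auto simp: medges_def)
  then show ?thesis by simp
qed

lemma reassigned_vertex_moves_to_unmatched:
  assumes len1: "length M1 = t" and len2: "length M2 = Suc t" and "distinct M2"
    and budget: "reassignments M1 M2 \<le> 4" and "i < t" and moved: "M2 ! i \<noteq> M1 ! i"
  shows "M2 ! i \<notin> set M1"
proof
  assume "M2 ! i \<in> set M1"
  then obtain i' where i': "i' < t" "M1 ! i' = M2 ! i" using len1 by (auto simp: in_set_conv_nth)
  have "i' \<noteq> i" using i' moved by auto
  have "M2 ! i' \<noteq> M1 ! i'"
    using i' \<open>i' \<noteq> i\<close> \<open>i < t\<close> len2 \<open>distinct M2\<close> by (auto simp: nth_eq_iff_index_eq)
  define D where "D = (medges M1 - medges M2) \<union> (medges M2 - medges M1)"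
  have "finite D" unfolding D_def by (simp add: finite_medges)
  have "(i, M1 ! i) \<in> D" "(i, M2 ! i) \<in> D" "(i', M1 ! i') \<in> D" "(t, M2 ! t) \<in> D"
    using len1 len2 \<open>i < t\<close> i' moved \<open>M2 ! i' \<noteq> M1 ! i'\<close> unfolding D_def by (auto simp: medges_def)
  then have "{i, i', t} \<subseteq> fst ` D" and "{M1 ! i, M2 ! i} \<subseteq> snd ` D" by force+
  then have "card {i, i', t} + card {M1 ! i, M2 ! i} \<le> card (fst ` D) + card (snd ` D)"
    using \<open>finite D\<close> by (intro add_mono card_mono) auto
  also have "\<dots> = reassignments M1 M2" unfolding reassignments_def D_def Let_def ..
  finally show False using budget \<open>i' \<noteq> i\<close> \<open>i < t\<close> i' moved by simp
qed

lemma out_take: "k \<le> i \<Longrightarrow> out alg m (take i ws) k = out alg m ws k"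
  by (simp add: out_def min_def)

lemma mweight_le_OPT:
  assumes "lpm m (length ws) M"
  shows "mweight ws M \<le> OPT m ws"
proof -
  have "{M. lpm m (length ws) M} \<subseteq> {xs. set xs \<subseteq> {..<m} \<and> length xs = length ws}"
    by (auto simp: lpm_def)
  then have "finite {M. lpm m (length ws) M}"
    by (rule finite_subset) (simp add: finite_lists_length_eq)
  then have "finite {mweight ws M | M. lpm m (length ws) M}"
    by (simp add: setcompr_eq_image)
  then show ?thesis unfolding OPT_def using assms by (intro Max_ge) auto
qed

definition round_weight :: "real list list \<Rightarrow> nat list \<Rightarrow> nat \<Rightarrow> real" where
  "round_weight ws M j = (\<Sum>i\<in>{4 * j..<4 * j + 4}. ws ! i ! (M ! i))"

lemma round_weight_expand:
  "round_weight ws M j = ws ! (4 * j) ! (M ! (4 * j)) + ws ! (4 * j + 1) ! (M ! (4 * j + 1))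
     + ws ! (4 * j + 2) ! (M ! (4 * j + 2)) + ws ! (4 * j + 3) ! (M ! (4 * j + 3))"
  by (simp add: round_weight_def numeral_eq_Suc add.assoc)

lemma mweight_eq_sum_round_weight:
  "length M = 4 * J \<Longrightarrow> mweight ws M = (\<Sum>j<J. round_weight ws M j)"
  using sum.nat_group[of "\<lambda>i. ws ! i ! (M ! i)" 4 J]
  by (simp add: mweight_def round_weight_def mult.commute)

lemma length_concat_equal_length:
  "(\<And>j. j < J \<Longrightarrow> length (B j) = k) \<Longrightarrow> length (concat (map B [0..<J])) = k * J"
  by (induction J) auto

lemma nth_concat_equal_length:
  assumes "\<And>j. j < J \<Longrightarrow> length (B j) = k" and "j < J" and "r < k"
  shows "concat (map B [0..<J]) ! (k * j + r) = B j ! r"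
  using assms
proof (induction J)
  case (Suc J)
  show ?case
  proof (cases "j < J")
    case True
    have "k * j + r < k * J"
      using True \<open>r < k\<close> mult_le_mono2[of "Suc j" J k] by simp
    with True Suc show ?thesis by (simp add: nth_append length_concat_equal_length)
  next
    case False
    then have "j = J" using Suc.prems(2) by simp
    with Suc show ?thesis by (simp add: nth_append length_concat_equal_length)
  qed
qed simp

definition indicator_row :: "nat \<Rightarrow> nat set \<Rightarrow> real list" where
  "indicator_row m S = map (\<lambda>r. if r \<in> S then 1 else 0) [0..<m]"

text \<open>The weight-1 neighbourhood of the vertex arriving after the rows R: s is the first
  arrival of its round and p the current partner of the third vertex of the round. When p is
  not fresh, any fresh vertex (here the least) will do.\<close>
definition adversary_support ::
    "(nat \<Rightarrow> real list list \<Rightarrow> nat list) \<Rightarrow> nat \<Rightarrow> real list list \<Rightarrow> nat set" where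
  "adversary_support alg m R =
     (let t = length R; s = t - t mod 4;
          fresh = set (out alg m R (s + 2)) - set (out alg m R s);
          p = out alg m R t ! (s + 2)
      in if t mod 4 = 2 then fresh
         else if t mod 4 = 3 then {if p \<in> fresh then p else Min fresh}
         else {})"

fun adversary_rows :: "(nat \<Rightarrow> real list list \<Rightarrow> nat list) \<Rightarrow> nat \<Rightarrow> nat \<Rightarrow> real list list" where
  "adversary_rows alg m 0 = []"
| "adversary_rows alg m (Suc t) =
     adversary_rows alg m t @ [indicator_row m (adversary_support alg m (adversary_rows alg m t))]"

lemma length_adversary_rows [simp]: "length (adversary_rows alg m t) = t"
  by (induction t) auto

lemma take_adversary_rows: "t \<le> s \<Longrightarrow> take t (adversary_rows alg m s) = adversary_rows alg m t"
  by (induction s) (auto simp: le_Suc_eq)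

lemma nth_adversary_rows:
  assumes "i < t"
  shows "adversary_rows alg m t ! i
    = indicator_row m (adversary_support alg m (take i (adversary_rows alg m t)))"
proof -
  have "adversary_rows alg m t ! i = take (Suc i) (adversary_rows alg m t) ! i" by simp
  also have "\<dots> = adversary_rows alg m (Suc i) ! i"
    using assms by (simp only: take_adversary_rows Suc_leI)
  finally show ?thesis
    using assms by (simp add: nth_append take_adversary_rows)
qed

lemma valid_instance_adversary_rows: "t \<le> m \<Longrightarrow> valid_instance m (adversary_rows alg m t)"
  by (auto simp: valid_instance_def in_set_conv_nth nth_adversary_rows indicator_row_def)

lemma adversary_rows_01: "\<forall>r\<in>set (adversary_rows alg m t). \<forall>x\<in>set r. x \<in> {0, 1}"
  by (auto simp: in_set_conv_nth nth_adversary_rows indicator_row_def)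

locale adversary_run =
  fixes alg :: "nat \<Rightarrow> real list list \<Rightarrow> nat list" and m J :: nat
  assumes valid_alg: "valid_alg 4 alg" and rounds_fit: "4 * J \<le> m"
begin

definition ws :: "real list list" where
  "ws = adversary_rows alg m (4 * J)"

abbreviation M :: "nat \<Rightarrow> nat list" where
  "M t \<equiv> out alg m ws t"

lemma length_ws [simp]: "length ws = 4 * J"
  by (simp add: ws_def)

lemma valid_instance_ws: "valid_instance m ws"
  unfolding ws_def using rounds_fit by (rule valid_instance_adversary_rows)

lemma M_step:
  assumes "1 \<le> t" and "t \<le> 4 * J"
  shows "lpm m t (M t) \<and> reassignments (M (t - 1)) (M t) \<le> 4 \<and> set (M (t - 1)) \<subseteq> set (M t)"
  using valid_alg valid_instance_ws assms unfolding valid_alg_def by auto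

lemma lpm_M: "t \<le> 4 * J \<Longrightarrow> lpm m t (M t)"
  using M_step[of t] by (cases "t = 0") (auto simp: lpm_def out_def)

lemma length_M [simp]: "t \<le> 4 * J \<Longrightarrow> length (M t) = t"
  using lpm_M by (simp add: lpm_def)

lemma distinct_M: "t \<le> 4 * J \<Longrightarrow> distinct (M t)"
  using lpm_M by (simp add: lpm_def)

lemma M_less_m: "t \<le> 4 * J \<Longrightarrow> x \<in> set (M t) \<Longrightarrow> x < m"
  using lpm_M by (auto simp: lpm_def)

lemma card_set_M: "t \<le> 4 * J \<Longrightarrow> card (set (M t)) = t"
  by (simp add: distinct_card distinct_M)

lemma set_M_mono: "a \<le> b \<Longrightarrow> b \<le> 4 * J \<Longrightarrow> set (M a) \<subseteq> set (M b)"
proof (induction b rule: dec_induct)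
  case (step b)
  then show ?case using M_step[of "Suc b"] by auto
qed simp

lemma card_set_M_diff: "a \<le> b \<Longrightarrow> b \<le> 4 * J \<Longrightarrow> card (set (M b) - set (M a)) = b - a"
  by (simp add: card_Diff_subset set_M_mono card_set_M)

text \<open>Each move of a left vertex goes to a right vertex outside the current matching,
  which contains all right vertices matched at time i + 1.\<close>
lemma M_nth_persistent:
  assumes "Suc i \<le> s" and "s \<le> 4 * J"
  shows "M s ! i = M (Suc i) ! i \<or> M s ! i \<notin> set (M (Suc i))"
  using assms
proof (induction s rule: dec_induct)
  case (step s)
  show ?case
  proof (cases "M (Suc s) ! i = M s ! i")
    case False
    have "M (Suc s) ! i \<notin> set (M s)"
      using M_step[of "Suc s"] step False
      by (intro reassigned_vertex_moves_to_unmatched[of _ s]) (auto simp: lpm_def)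
    moreover have "set (M (Suc i)) \<subseteq> set (M s)" using step by (intro set_M_mono) auto
    ultimately show ?thesis by auto
  qed (use step in simp)
qed simp

definition fresh :: "nat \<Rightarrow> nat set" where
  "fresh j = set (M (4 * j + 2)) - set (M (4 * j))"

definition target :: "nat \<Rightarrow> nat" where
  "target j = (let p = M (4 * j + 3) ! (4 * j + 2) in if p \<in> fresh j then p else Min (fresh j))"

lemma card_fresh: "j < J \<Longrightarrow> card (fresh j) = 2"
  unfolding fresh_def by (subst card_set_M_diff) auto

lemma target_in_fresh: "j < J \<Longrightarrow> target j \<in> fresh j"
  using card_fresh[of j] by (auto simp: target_def Let_def card_ge_0_finite intro: Min_in)

lemma ws_entry:
  assumes "i < 4 * J" and "r < m"
  shows "ws ! i ! r = (if r \<in> adversary_support alg m (take i ws) then 1 else 0)"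
  using assms by (simp add: ws_def nth_adversary_rows indicator_row_def)

lemma ws_entry_nonneg: "i < 4 * J \<Longrightarrow> r < m \<Longrightarrow> 0 \<le> ws ! i ! r"
  by (simp add: ws_entry)

lemma ws_round_entries:
  assumes "j < J" and "r < m"
  shows "ws ! (4 * j) ! r = 0" and "ws ! (4 * j + 1) ! r = 0"
    and "ws ! (4 * j + 2) ! r = (if r \<in> fresh j then 1 else 0)"
    and "ws ! (4 * j + 3) ! r = (if r = target j then 1 else 0)"
  using assms
  by (simp_all add: ws_entry adversary_support_def Let_def out_take fresh_def target_def
      mod_mult_self3 mod_mult_self4 del: add_2_eq_Suc' numeral_3_eq_3)

lemma final_M_less_m: "i < 4 * J \<Longrightarrow> M (4 * J) ! i < m"
  using M_less_m[of "4 * J"] by simp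

lemma round_weight_final_le_1:
  assumes "j < J"
  shows "round_weight ws (M (4 * J)) j \<le> 1"
proof -
  let ?F = "M (4 * J)"
  have j3: "4 * j + 3 < 4 * J" using assms by simp
  have "?F ! (4 * j + 3) \<noteq> target j" if "?F ! (4 * j + 2) \<in> fresh j"
  proof -
    have "fresh j \<subseteq> set (M (4 * j + 3))"
      unfolding fresh_def using j3 set_M_mono[of "4 * j + 2" "4 * j + 3"] by auto
    moreover have "?F ! (4 * j + 2) = M (4 * j + 3) ! (4 * j + 2)
        \<or> ?F ! (4 * j + 2) \<notin> set (M (4 * j + 3))"
      using M_nth_persistent[of "4 * j + 2" "4 * J"] j3 by (simp add: numeral_3_eq_3)
    ultimately have "?F ! (4 * j + 2) = M (4 * j + 3) ! (4 * j + 2)" using that by blast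
    with that have "target j = ?F ! (4 * j + 2)" by (simp add: target_def)
    moreover have "?F ! (4 * j + 3) \<noteq> ?F ! (4 * j + 2)"
      using distinct_M[of "4 * J"] j3 by (simp add: nth_eq_iff_index_eq)
    ultimately show ?thesis by simp
  qed
  then show ?thesis
    using j3 ws_round_entries[OF assms final_M_less_m, of "4 * j + 3"]
      ws_round_entries[OF assms final_M_less_m, of "4 * j + 2"]
      ws_round_entries[OF assms final_M_less_m, of "4 * j + 1"]
      ws_round_entries[OF assms final_M_less_m, of "4 * j"]
    by (auto simp: round_weight_expand)
qed

lemma final_weight_le: "final_weight alg m ws \<le> J"
proof -
  have "final_weight alg m ws = (\<Sum>j<J. round_weight ws (M (4 * J)) j)"
    unfolding final_weight_def by (simp add: mweight_eq_sum_round_weight)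
  also have "\<dots> \<le> (\<Sum>j<J. 1)" by (intro sum_mono round_weight_final_le_1) simp
  finally show ?thesis by simp
qed

definition opt_block :: "nat \<Rightarrow> nat list" where
  "opt_block j = sorted_list_of_set (set (M (4 * j + 4)) - set (M (4 * j + 2)))
     @ sorted_list_of_set (fresh j - {target j}) @ [target j]"

lemma opt_block_spec:
  assumes "j < J"
  shows "length (opt_block j) = 4"
    and "set (opt_block j) = set (M (4 * j + 4)) - set (M (4 * j))"
    and "opt_block j ! 2 \<in> fresh j"
    and "opt_block j ! 3 = target j"
proof -
  let ?Y = "set (M (4 * j + 4)) - set (M (4 * j + 2))"
  have "card ?Y = 2" using assms by (subst card_set_M_diff) auto
  then have Y: "length (sorted_list_of_set ?Y) = 2" "set (sorted_list_of_set ?Y) = ?Y"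
    by (simp_all add: card_ge_0_finite)
  have "card (fresh j - {target j}) = 1"
    using card_fresh[OF assms] target_in_fresh[OF assms] by simp
  then obtain x where x: "fresh j - {target j} = {x}" by (auto simp: card_1_singleton_iff)
  then have "x \<in> fresh j" by blast
  have "fresh j = {x, target j}" using x target_in_fresh[OF assms] by blast
  have block: "opt_block j = sorted_list_of_set ?Y @ [x, target j]"
    by (simp add: opt_block_def x)
  show "length (opt_block j) = 4" using Y by (simp add: block)
  show "opt_block j ! 2 \<in> fresh j" "opt_block j ! 3 = target j"
    using Y \<open>x \<in> fresh j\<close> by (simp_all add: block nth_append)
  have "set (M (4 * j)) \<subseteq> set (M (4 * j + 2))" "set (M (4 * j + 2)) \<subseteq> set (M (4 * j + 4))"
    using assms by (simp_all add: set_M_mono)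
  then show "set (opt_block j) = set (M (4 * j + 4)) - set (M (4 * j))"
    using Y \<open>fresh j = {x, target j}\<close> unfolding block fresh_def by auto
qed

definition opt_witness :: "nat list" where
  "opt_witness = concat (map opt_block [0..<J])"

lemma set_concat_opt_block: "K \<le> J \<Longrightarrow> set (concat (map opt_block [0..<K])) = set (M (4 * K))"
proof (induction K)
  case (Suc K)
  have "set (M (4 * K)) \<subseteq> set (M (4 * K + 4))" using Suc.prems by (simp add: set_M_mono)
  then have "set (concat (map opt_block [0..<Suc K])) = set (M (4 * K + 4))"
    using Suc opt_block_spec(2)[of K] by auto
  then show ?case by (simp add: add.commute)
qed (simp add: out_def)

lemma lpm_opt_witness: "lpm m (4 * J) opt_witness"
proof -
  have len: "length opt_witness = 4 * J"
    unfolding opt_witness_def by (simp add: length_concat_equal_length opt_block_spec(1))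
  have set: "set opt_witness = set (M (4 * J))"
    unfolding opt_witness_def by (rule set_concat_opt_block) simp
  then have "distinct opt_witness" using len card_set_M[of "4 * J"] by (simp add: card_distinct)
  then show ?thesis using len set M_less_m[of "4 * J"] by (auto simp: lpm_def)
qed

lemma opt_witness_nth: "j < J \<Longrightarrow> r < 4 \<Longrightarrow> opt_witness ! (4 * j + r) = opt_block j ! r"
  unfolding opt_witness_def by (simp add: nth_concat_equal_length opt_block_spec(1))

lemma round_weight_opt_witness:
  assumes "j < J"
  shows "2 \<le> round_weight ws opt_witness j"
proof -
  have lt: "opt_witness ! (4 * j + r) < m" if "r < 4" for r
    using lpm_opt_witness nth_mem[of "4 * j + r" opt_witness] that assms by (auto simp: lpm_def)
  have "ws ! (4 * j + 2) ! (opt_witness ! (4 * j + 2)) = 1"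
    using ws_round_entries(3)[OF assms lt, of 2] opt_witness_nth[OF assms, of 2]
      opt_block_spec(3)[OF assms] by simp
  moreover have "ws ! (4 * j + 3) ! (opt_witness ! (4 * j + 3)) = 1"
    using ws_round_entries(4)[OF assms lt, of 3] opt_witness_nth[OF assms, of 3]
      opt_block_spec(4)[OF assms] by simp
  moreover have "0 \<le> ws ! (4 * j) ! (opt_witness ! (4 * j))"
    and "0 \<le> ws ! (4 * j + 1) ! (opt_witness ! (4 * j + 1))"
    using assms lt[of 0] lt[of 1] by (simp_all add: ws_entry_nonneg)
  ultimately show ?thesis by (simp add: round_weight_expand)
qed

lemma OPT_ge: "2 * J \<le> OPT m ws"
proof -
  have "(\<Sum>j<J. 2) \<le> (\<Sum>j<J. round_weight ws opt_witness j)"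
    by (intro sum_mono round_weight_opt_witness) simp
  also have "\<dots> = mweight ws opt_witness"
    using lpm_opt_witness by (simp add: mweight_eq_sum_round_weight lpm_def)
  also have "\<dots> \<le> OPT m ws"
    using lpm_opt_witness by (intro mweight_le_OPT) simp
  finally show ?thesis by simp
qed

end

theorem theorem4:
  fixes \<epsilon> :: real
  assumes "\<epsilon> > 0"
  shows "\<forall>alg. valid_alg 4 alg \<longrightarrow>
           (\<forall>c::real. c \<ge> 0 \<longrightarrow>
              (\<exists>m ws. valid_instance m ws \<and> (\<forall>r\<in>set ws. \<forall>x\<in>set r. x \<in> {0, 1}) \<and>
                 final_weight alg m ws < (1/2 + \<epsilon>) * OPT m ws - c))"
proof (intro allI impI)
  fix alg and c :: real
  assume "valid_alg 4 alg" and "c \<ge> 0"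
  obtain J :: nat where "c / \<epsilon> < J" using reals_Archimedean2 by blast
  then have "c < \<epsilon> * J" using assms by (simp add: field_simps)
  interpret adversary_run alg "4 * J" J using \<open>valid_alg 4 alg\<close> by unfold_locales simp_all
  have "final_weight alg (4 * J) ws \<le> J" by (rule final_weight_le)
  also have "\<dots> < (1/2 + \<epsilon>) * (2 * J) - c"
  proof -
    have "(1/2 + \<epsilon>) * (2 * J) = J + 2 * (\<epsilon> * J)" by (simp add: algebra_simps)
    moreover have "0 \<le> \<epsilon> * J" using assms by simp
    ultimately show ?thesis using \<open>c < \<epsilon> * J\<close> by linarith
  qed
  also have "\<dots> \<le> (1/2 + \<epsilon>) * OPT (4 * J) ws - c"
    using OPT_ge assms by (intro diff_right_mono mult_left_mono) auto
  finally show "\<exists>m ws. valid_instance m ws \<and> (\<forall>r\<in>set ws. \<forall>x\<in>set r. x \<in> {0, 1}) \<and>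
      final_weight alg m ws < (1/2 + \<epsilon>) * OPT m ws - c"
    using valid_instance_ws adversary_rows_01 unfolding ws_def by blast
qed

end
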